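(* Let $\mathcal{X}$ be a hereditary class with speed above the Bell number and finite distinguishing number $k_{\mathcal{X}}$, and let $\ell_{\mathcal{X}},d_{\mathcal{X}},c_{\mathcal{X}}$ be constants such that every $G\in\mathcal{X}$ contains an induced subgraph $G'$ which is a strong $(\ell_{\mathcal{X}},d_{\mathcal{X}})$-graph with $|V(G)\setminus V(G')|<c_{\mathcal{X}}$. Then for each positive integer $m$, the class $\mathcal{X}$ contains a graph isomorphic to $G_{w,H}(1,2,\dots,m)$ for some graph $H$ with loops allowed having at most $\ell_{\mathcal{X}}$ vertices and some word $w$ of length $m$ over $V(H)$ (an $\ell_{\mathcal{X}}$-factor of order $m$).
   Context: Hereditary classes are closed under isomorphism and induced subgraphs. Speed above the Bell number: number of graphs in $\mathcal{X}$ on $\{1,\dots,n\}$ is at least $n^{(1-o(1))n}$. Distinguishing number: for $X\subseteq V(G)$, disjoint sets $U_1,\dots,U_m$ are distinguished by $X$ if vertices of the same $U_i$ have the same neighbourhood in $X$ and vertices of different $U_i$ different ones; $k_{\mathcal{X}}<\infty$ means there are $k,m$ such that no vertex subset of any graph in $\mathcal{X}$ distinguishes more than $m$ sets of size at least $k$ (such constants $\ell_{\mathcal{X}},d_{\mathcal{X}},c_{\mathcal{X}}$ then exist). $(\ell,d)$-partition of $V(G)$: at most $\ell$ bags such that for every (not necessarily distinct) pair of bags $(V_i,V_j)$, either every vertex of $V_i$ has at most $d$ neighbours in $V_j$ and vice versa, or every vertex of $V_i$ has at most $d$ non-neighbours in $V_j\setminus\{\text{itself}\}$ and vice versa; strong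 if each bag has at least $5\cdot2^\ell d$ vertices; a strong $(\ell,d)$-graph admits a strong $(\ell,d)$-partition. For a graph $H$ with loops allowed on $A$, a word $w$ over $A$ and positive integers $u_1<\dots<u_k\le|w|$, $G_{w,H}(u_1,\dots,u_k)$ has vertex set $\{u_i\}$ and $u_iu_j$ is an edge iff ($|u_i-u_j|=1$ and $w_{u_i}w_{u_j}\notin E(H)$) or ($|u_i-u_j|>1$ and $w_{u_i}w_{u_j}\in E(H)$) (loops for equal letters). *)

theory Defs
  imports Complex_Main
begin

text \<open>Finite simple graphs with natural-number vertices: a pair (V, E) where E is a
  symmetric irreflexive set of ordered pairs of vertices of V.\<close>

type_synonym ugraph = "nat set \<times> (nat \<times> nat) set"

definition verts :: "ugraph \<Rightarrow> nat set" where "verts G = fst G"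
definition edges :: "ugraph \<Rightarrow> (nat \<times> nat) set" where "edges G = snd G"

definition is_graph :: "ugraph \<Rightarrow> bool" where
  "is_graph G \<longleftrightarrow> finite (verts G) \<and> edges G \<subseteq> verts G \<times> verts G
     \<and> (\<forall>u v. (u, v) \<in> edges G \<longrightarrow> (v, u) \<in> edges G)
     \<and> (\<forall>v. (v, v) \<notin> edges G)"

definition induced :: "ugraph \<Rightarrow> nat set \<Rightarrow> ugraph" where
  "induced G S = (S, edges G \<inter> (S \<times> S))"

definition nbhd :: "ugraph \<Rightarrow> nat \<Rightarrow> nat set" where
  "nbhd G v = {u. (v, u) \<in> edges G}"

definition graph_iso :: "ugraph \<Rightarrow> ugraph \<Rightarrow> bool" where
  "graph_iso G G' \<longleftrightarrow> (\<exists>f. bij_betw f (verts G) (verts G') \<and>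
     (\<forall>u\<in>verts G. \<forall>v\<in>verts G. (u, v) \<in> edges G \<longleftrightarrow> (f u, f v) \<in> edges G'))"

definition hereditary :: "ugraph set \<Rightarrow> bool" where
  "hereditary \<X> \<longleftrightarrow> (\<forall>G\<in>\<X>. is_graph G)
     \<and> (\<forall>G G'. G \<in> \<X> \<longrightarrow> is_graph G' \<longrightarrow> graph_iso G G' \<longrightarrow> G' \<in> \<X>)
     \<and> (\<forall>G S. G \<in> \<X> \<longrightarrow> S \<subseteq> verts G \<longrightarrow> induced G S \<in> \<X>)"

definition speed :: "ugraph set \<Rightarrow> nat \<Rightarrow> nat" where
  "speed \<X> n = card {E. ({1..n}, E) \<in> \<X>}"

definition speed_above_bell :: "ugraph set \<Rightarrow> bool" where
  "speed_above_bell \<X> \<longleftrightarrow> (\<forall>\<epsilon>>0. eventually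
     (\<lambda>n. real (speed \<X> n) \<ge> real n powr ((1 - \<epsilon>) * real n)) sequentially)"

definition distinguishes :: "ugraph \<Rightarrow> nat set \<Rightarrow> nat set set \<Rightarrow> bool" where
  "distinguishes G X \<U> \<longleftrightarrow>
     (\<forall>U\<in>\<U>. U \<subseteq> verts G - X) \<and>
     (\<forall>U\<in>\<U>. \<forall>U'\<in>\<U>. U \<noteq> U' \<longrightarrow> U \<inter> U' = {}) \<and>
     (\<forall>U\<in>\<U>. \<forall>u\<in>U. \<forall>v\<in>U. nbhd G u \<inter> X = nbhd G v \<inter> X) \<and>
     (\<forall>U\<in>\<U>. \<forall>U'\<in>\<U>. U \<noteq> U' \<longrightarrow> (\<forall>u\<in>U. \<forall>v\<in>U'. nbhd G u \<inter> X \<noteq> nbhd G v \<inter> X))"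

definition finite_distinguishing_number :: "ugraph set \<Rightarrow> bool" where
  "finite_distinguishing_number \<X> \<longleftrightarrow> (\<exists>k m::nat. \<forall>G\<in>\<X>. \<forall>X \<subseteq> verts G. \<forall>\<U>.
     distinguishes G X \<U> \<and> (\<forall>U\<in>\<U>. card U \<ge> k) \<longrightarrow> finite \<U> \<and> card \<U> \<le> m)"

definition ld_partition :: "ugraph \<Rightarrow> nat \<Rightarrow> nat \<Rightarrow> nat set set \<Rightarrow> bool" where
  "ld_partition G l d P \<longleftrightarrow>
     \<Union>P = verts G \<and> {} \<notin> P \<and> (\<forall>A\<in>P. \<forall>B\<in>P. A \<noteq> B \<longrightarrow> A \<inter> B = {}) \<and>
     finite P \<and> card P \<le> l \<and>
     (\<forall>A\<in>P. \<forall>B\<in>P.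
        ((\<forall>v\<in>A. card (nbhd G v \<inter> B) \<le> d) \<and> (\<forall>v\<in>B. card (nbhd G v \<inter> A) \<le> d)) \<or>
        ((\<forall>v\<in>A. card (B - nbhd G v - {v}) \<le> d) \<and> (\<forall>v\<in>B. card (A - nbhd G v - {v}) \<le> d)))"

definition strong_ld_partition :: "ugraph \<Rightarrow> nat \<Rightarrow> nat \<Rightarrow> nat set set \<Rightarrow> bool" where
  "strong_ld_partition G l d P \<longleftrightarrow> ld_partition G l d P \<and>
     (\<forall>A\<in>P. card A \<ge> 5 * 2 ^ l * d)"

definition strong_ld_graph :: "ugraph \<Rightarrow> nat \<Rightarrow> nat \<Rightarrow> bool" where
  "strong_ld_graph G l d \<longleftrightarrow> (\<exists>P. strong_ld_partition G l d P)"

text \<open>G_{w,H}(1,...,m) with m = length w: H has vertex set A (letters) and a symmetric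
  edge relation EH on A, loops allowed; w is a word over A (positions 1-based).\<close>
definition factor_graph :: "(nat \<times> nat) set \<Rightarrow> nat list \<Rightarrow> ugraph" where
  "factor_graph EH w = ({1..length w},
     {(i, j). i \<in> {1..length w} \<and> j \<in> {1..length w} \<and> i \<noteq> j \<and>
        ((nat \<bar>int i - int j\<bar> = 1 \<and> (w ! (i - 1), w ! (j - 1)) \<notin> EH) \<or>
         (nat \<bar>int i - int j\<bar> > 1 \<and> (w ! (i - 1), w ! (j - 1)) \<in> EH))})"

end

theory Submission
  imports Defs "HOL-Library.FuncSet"
begin

text \<open>Suppose \<open>\<X>\<close> contained no \<open>l\<close>-factor of order \<open>m\<close>. In a graph of \<open>\<X>\<close> with strong
  part \<open>V'\<close> and bags \<open>P\<close>, call a pair of vertices of \<open>V'\<close> a flip if its adjacency disagrees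
  with the dense/sparse type of its two bags. Every vertex has at most \<open>l * d\<close> flips, and an
  induced path of \<open>m\<close> flips is a copy of \<open>G_{w,H}(1,...,m)\<close> whose letters are the bags and
  where \<open>H\<close> records the dense pairs. A shortest walk to a vertex at distance at least \<open>m\<close>
  would be such a path, so every flip component has at most \<open>s = \<Sum>k<m. (l * d)^k\<close> vertices.
  A graph on \<open>n\<close> vertices is then determined by a bounded amount of data per vertex (its bag,
  its neighbours among the fewer than \<open>c\<close> vertices outside \<open>V'\<close>, its flips) together with
  the partition into flip components, which has at least \<open>n / s\<close> classes. This leaves at most
  \<open>C * B^n * n^(n - n/s)\<close> graphs on \<open>n\<close> vertices, fewer than \<open>n^((1 - 1/(2s)) n)\<close> for large
  \<open>n\<close>, contradicting speed above the Bell number.\<close>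

section \<open>Induced paths in relations of bounded degree\<close>

lemma chain_relpow:
  assumes "\<forall>i<n. (f i, f (Suc i)) \<in> R" "i + k \<le> n"
  shows "(f i, f (i + k)) \<in> R ^^ k"
  using assms(2)
proof (induction k)
  case (Suc k)
  then have "(f i, f (i + k)) \<in> R ^^ k" by simp
  moreover have "(f (i + k), f (Suc (i + k))) \<in> R" using assms(1) Suc.prems by simp
  ultimately show ?case by auto
qed simp

lemma card_relpow_image_le:
  fixes R :: "('a \<times> 'a) set"
  assumes "\<And>x. finite (R `` {x}) \<and> card (R `` {x}) \<le> D"
  shows "finite ((R ^^ k) `` {x}) \<and> card ((R ^^ k) `` {x}) \<le> D ^ k"
proof (induction k)
  case 0
  have "(R ^^ 0) `` {x} = {x}" by auto
  then show ?case by simp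
next
  case (Suc k)
  have eq: "(R ^^ Suc k) `` {x} = (\<Union>z \<in> (R ^^ k) `` {x}. R `` {z})" by auto
  have "card ((R ^^ Suc k) `` {x}) \<le> (\<Sum>z \<in> (R ^^ k) `` {x}. card (R `` {z}))"
    unfolding eq by (rule card_UN_le) (use Suc in auto)
  also have "\<dots> \<le> (\<Sum>z \<in> (R ^^ k) `` {x}. D)" by (rule sum_mono) (use assms in auto)
  also have "\<dots> \<le> D ^ Suc k" using Suc by (simp add: mult.commute)
  finally show ?case unfolding eq using Suc assms by auto
qed

lemma far_vertex_exists:
  assumes "\<And>x. finite (R `` {x}) \<and> card (R `` {x}) \<le> D"
    and "card (R\<^sup>* `` {v}) > (\<Sum>k<m. D ^ k)"
  obtains u where "(v, u) \<in> R\<^sup>*" "\<forall>k<m. (v, u) \<notin> R ^^ k"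
proof -
  have "\<not> R\<^sup>* `` {v} \<subseteq> (\<Union>k<m. (R ^^ k) `` {v})"
  proof
    assume sub: "R\<^sup>* `` {v} \<subseteq> (\<Union>k<m. (R ^^ k) `` {v})"
    have "card (R\<^sup>* `` {v}) \<le> card (\<Union>k<m. (R ^^ k) `` {v})"
      by (rule card_mono) (use card_relpow_image_le[OF assms(1)] sub in auto)
    also have "\<dots> \<le> (\<Sum>k<m. card ((R ^^ k) `` {v}))" by (rule card_UN_le) auto
    also have "\<dots> \<le> (\<Sum>k<m. D ^ k)" by (rule sum_mono) (use card_relpow_image_le[OF assms(1)] in auto)
    finally show False using assms(2) by simp
  qed
  then show thesis using that by blast
qed

text \<open>A shortest walk is an induced path: a repeated vertex or a chord would shorten it.\<close>
lemma shortest_walk_induced_path: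
  assumes "(v, u) \<in> R ^^ n" and shortest: "\<forall>k<n. (v, u) \<notin> R ^^ k"
  obtains f where "f 0 = v" "\<forall>i<n. (f i, f (Suc i)) \<in> R" "inj_on f {0..n}"
    "\<forall>i j. j \<le> n \<longrightarrow> Suc i < j \<longrightarrow> (f i, f j) \<notin> R"
proof -
  obtain f where f: "f 0 = v" "f n = u" "\<forall>i<n. (f i, f (Suc i)) \<in> R"
    using assms(1) relpow_fun_conv by metis
  have shortcut: "(v, u) \<notin> R ^^ i O R ^^ k O R ^^ (n - j)" if "i + k < j" "j \<le> n" "(f i, f j) \<in> R ^^ k" for i j k
  proof
    assume "(v, u) \<in> R ^^ i O R ^^ k O R ^^ (n - j)"
    then have "(v, u) \<in> R ^^ (i + k + (n - j))" by (simp add: relpow_add O_assoc)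
    then show False using shortest that by auto
  qed
  have ends: "(v, f i) \<in> R ^^ i" "(f j, u) \<in> R ^^ (n - j)" if "i \<le> n" "j \<le> n" for i j
    using chain_relpow[OF f(3), of 0 i] chain_relpow[OF f(3), of j "n - j"] f(1,2) that by auto
  have "f i \<noteq> f j" if "i < j" "j \<le> n" for i j
    using shortcut[of i 0 j] ends[of i j] that by auto
  then have "inj_on f {0..n}"
    by (intro inj_onI) (metis atLeastAtMost_iff linorder_neqE_nat)
  moreover have "(f i, f j) \<notin> R" if "j \<le> n" "Suc i < j" for i j
    using shortcut[of i 1 j] ends[of i j] that by auto
  ultimately show thesis using that f by blast
qed

lemma induced_path_in_large_component:
  assumes "\<And>x. finite (R `` {x}) \<and> card (R `` {x}) \<le> D"
    and "card (R\<^sup>* `` {v}) > (\<Sum>k<m. D ^ k)"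
  obtains f where "inj_on f {0..<m}" "\<forall>i. Suc i < m \<longrightarrow> (f i, f (Suc i)) \<in> R"
    "\<forall>i j. j < m \<longrightarrow> Suc i < j \<longrightarrow> (f i, f j) \<notin> R" "\<forall>i<m. (v, f i) \<in> R\<^sup>*"
proof -
  obtain u where u: "(v, u) \<in> R\<^sup>*" "\<forall>k<m. (v, u) \<notin> R ^^ k"
    using far_vertex_exists[OF assms] .
  define n where "n = (LEAST n. (v, u) \<in> R ^^ n)"
  have vu: "(v, u) \<in> R ^^ n"
    unfolding n_def using u(1) rtrancl_power by (metis LeastI_ex)
  have "\<forall>k<n. (v, u) \<notin> R ^^ k" unfolding n_def using not_less_Least by blast
  then obtain f where f: "f 0 = v" "\<forall>i<n. (f i, f (Suc i)) \<in> R" "inj_on f {0..n}"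
    "\<forall>i j. j \<le> n \<longrightarrow> Suc i < j \<longrightarrow> (f i, f j) \<notin> R"
    using shortest_walk_induced_path[OF vu] by blast
  have mn: "m \<le> n" using u(2) vu by (meson not_le)
  have "(v, f i) \<in> R\<^sup>*" if "i \<le> n" for i
    using chain_relpow[OF f(2), of 0 i] f(1) that relpow_imp_rtrancl by auto
  moreover have "inj_on f {0..<m}" using mn by (intro inj_on_subset[OF f(3)]) auto
  ultimately show thesis using that f mn by auto
qed


section \<open>Representative systems of small classes\<close>

text \<open>\<open>M\<close> is a set of class representatives and \<open>g\<close> sends every other element to the
  representative of its class.\<close>
definition representative_systems :: "'a set \<Rightarrow> nat \<Rightarrow> ('a set \<times> ('a \<Rightarrow> 'a)) set" where
  "representative_systems S s = (SIGMA M:{M. M \<subseteq> S \<and> card S \<le> s * card M}. (S - M) \<rightarrow>\<^sub>E S)"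

lemma finite_representative_systems:
  "finite S \<Longrightarrow> finite (representative_systems S s)"
  unfolding representative_systems_def by (intro finite_SigmaI finite_PiE) auto

lemma card_representative_systems_le:
  assumes "finite S" "card S = n" "s \<ge> 1" "n \<ge> 1"
  shows "real (card (representative_systems S s)) \<le> 2 ^ n * real n powr (real n - real n / real s)"
proof -
  let ?A = "{M. M \<subseteq> S \<and> card S \<le> s * card M}"
  have finA: "finite ?A" using assms(1) by auto
  have finB: "\<And>M. finite ((S - M) \<rightarrow>\<^sub>E S)" using assms(1) by (simp add: finite_PiE)
  have each: "real (card ((S - M) \<rightarrow>\<^sub>E S)) \<le> real n powr (real n - real n / real s)"
    if M: "M \<in> ?A" for M
  proof -
    have MS: "M \<subseteq> S" and nsM: "n \<le> s * card M" using M assms(2) by simp_all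
    have le: "card M \<le> n" using MS assms(1,2) card_mono by blast
    have "card (S - M) = n - card M"
      using MS assms(1,2) by (simp add: card_Diff_subset finite_subset)
    then have "card ((S - M) \<rightarrow>\<^sub>E S) = n ^ (n - card M)"
      using assms by (simp add: card_PiE)
    then have "real (card ((S - M) \<rightarrow>\<^sub>E S)) = real n powr real (n - card M)"
      using assms by (simp add: powr_realpow)
    also have "\<dots> \<le> real n powr (real n - real n / real s)"
    proof (rule powr_mono)
      have "real n \<le> real s * real (card M)" using nsM by (metis of_nat_le_iff of_nat_mult)
      then have "real n / real s \<le> real (card M)" using assms by (simp add: divide_le_eq mult.commute)
      then show "real (n - card M) \<le> real n - real n / real s" using le by simp
      show "1 \<le> real n" using assms by simp
    qed
    finally show ?thesis .
  qed
  have "real (card (representative_systems S s)) = (\<Sum>M\<in>?A. real (card ((S - M) \<rightarrow>\<^sub>E S)))"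
    unfolding representative_systems_def using finA finB assms(2) by (simp add: card_SigmaI)
  also have "\<dots> \<le> (\<Sum>M\<in>?A. real n powr (real n - real n / real s))"
    by (rule sum_mono) (rule each)
  also have "\<dots> = real (card ?A) * real n powr (real n - real n / real s)" by simp
  also have "\<dots> \<le> 2 ^ n * real n powr (real n - real n / real s)"
  proof (rule mult_right_mono)
    have "card ?A \<le> card (Pow S)" by (rule card_mono) (use assms in auto)
    then show "real (card ?A) \<le> 2 ^ n" using assms by (simp add: card_Pow)
  qed simp
  finally show ?thesis .
qed

definition representative :: "'a set \<Rightarrow> ('a \<Rightarrow> 'a) \<Rightarrow> 'a \<Rightarrow> 'a" where
  "representative M g v = (if v \<in> M then v else g v)"

lemma equiv_rtrancl_Int:
  assumes "sym F"
  shows "equiv S (F\<^sup>* \<inter> S \<times> S)"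
proof (rule equivI)
  show "F\<^sup>* \<inter> S \<times> S \<subseteq> S \<times> S" by blast
  show "refl_on S (F\<^sup>* \<inter> S \<times> S)" unfolding refl_on_def by blast
  show "sym (F\<^sup>* \<inter> S \<times> S)" using sym_rtrancl[OF assms(1)] by (auto intro: symI dest: symD)
  show "trans (F\<^sup>* \<inter> S \<times> S)" by (auto intro: transI)
qed

lemma representative_system_of_small_classes:
  assumes S: "finite S" and Q: "equiv S Q" and small: "\<forall>v\<in>S. card (Q `` {v}) \<le> s"
  obtains M g where "(M, g) \<in> representative_systems S s"
    "\<forall>u\<in>S. \<forall>v\<in>S. representative M g u = representative M g v \<longleftrightarrow> (u, v) \<in> Q"
proof -
  define r where "r v = (SOME x. x \<in> Q `` {v})" for v
  have class_fin: "finite (Q `` {v})" for v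
  proof -
    have "Q `` {v} \<subseteq> S" using Q unfolding equiv_def refl_on_def by blast
    then show ?thesis using S by (rule finite_subset)
  qed
  have r_in: "r v \<in> Q `` {v}" if "v \<in> S" for v
    unfolding r_def using equiv_class_self[OF Q that] by (rule someI)
  have r_eq: "r u = r v \<longleftrightarrow> (u, v) \<in> Q" if "u \<in> S" "v \<in> S" for u v
  proof
    assume "r u = r v"
    then show "(u, v) \<in> Q" using r_in[OF that(1)] r_in[OF that(2)] Q
      by (metis Image_singleton_iff equiv_def symD transD)
  next
    assume "(u, v) \<in> Q"
    then show "r u = r v" unfolding r_def using equiv_class_eq[OF Q] by simp
  qed
  have rS: "r v \<in> S" if "v \<in> S" for v
    using r_in[OF that] Q unfolding equiv_def refl_on_def by blast
  have r_idem: "r (r v) = r v" if "v \<in> S" for v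
    using r_eq[OF rS[OF that] that] r_in[OF that] Q
    by (metis Image_singleton_iff equiv_def symD)
  define M where "M = {v \<in> S. r v = v}"
  define g where "g = restrict r (S - M)"
  have rep: "representative M g v = r v" if "v \<in> S" for v
    using that unfolding representative_def M_def g_def by auto
  have "S \<subseteq> (\<Union>x\<in>M. Q `` {x})"
  proof
    fix v assume v: "v \<in> S"
    have "(r v, v) \<in> Q" using r_in[OF v] Q by (metis Image_singleton_iff equiv_def symD)
    then show "v \<in> (\<Union>x\<in>M. Q `` {x})" unfolding M_def using rS[OF v] r_idem[OF v] by blast
  qed
  moreover have finM: "finite M" unfolding M_def using S by simp
  ultimately have "card S \<le> card (\<Union>x\<in>M. Q `` {x})" using class_fin by (intro card_mono) auto
  also have "\<dots> \<le> (\<Sum>x\<in>M. card (Q `` {x}))" by (rule card_UN_le[OF finM])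
  also have "\<dots> \<le> card M * s" using small sum_bounded_above[of M "\<lambda>x. card (Q `` {x})" s]
    unfolding M_def by auto
  finally have "card S \<le> s * card M" by (simp add: mult.commute)
  then have "(M, g) \<in> representative_systems S s"
    unfolding representative_systems_def M_def g_def using rS by auto
  then show thesis using that rep r_eq by simp
qed


section \<open>Growth below the Bell number\<close>

lemma exp_times_powr_eventually_less:
  fixes B C :: real and s :: nat
  assumes "B \<ge> 1" "C \<ge> 1" "s \<ge> 1"
  shows "eventually (\<lambda>n::nat. C * B ^ n * real n powr (real n - real n / real s)
            < real n powr ((1 - 1 / (2 * real s)) * real n)) sequentially"
proof -
  obtain N1 :: nat where N1: "real N1 \<ge> (2 * B) powr (2 * real s)" using real_arch_simple by blast
  obtain N2 :: nat where N2: "C < 2 ^ N2" using real_arch_pow[of 2 C] by auto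
  show ?thesis unfolding eventually_sequentially
  proof (intro exI[of _ "N1 + N2 + 1"] allI impI)
    fix n :: nat assume n: "N1 + N2 + 1 \<le> n"
    have npos: "real n > 0" using n by simp
    have "(2 * B) powr (2 * real s) \<le> real n" using N1 n by linarith
    then have "((2 * B) powr (2 * real s)) powr (1 / (2 * real s)) \<le> real n powr (1 / (2 * real s))"
      using assms by (intro powr_mono2) auto
    then have hB: "2 * B \<le> real n powr (1 / (2 * real s))" using assms by (simp add: powr_powr)
    have "C < 2 ^ n" using N2 n power_increasing[of N2 n "2::real"] by linarith
    then have "C * B ^ n < 2 ^ n * B ^ n" using assms by simp
    also have "\<dots> = (2 * B) ^ n" by (simp add: power_mult_distrib)
    also have "\<dots> \<le> (real n powr (1 / (2 * real s))) ^ n" using hB assms by (intro power_mono) auto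
    also have "\<dots> = real n powr (real n / (2 * real s))"
      using npos by (simp add: powr_realpow[symmetric] powr_powr)
    finally have key: "C * B ^ n < real n powr (real n / (2 * real s))" .
    have "C * B ^ n * real n powr (real n - real n / real s)
          < real n powr (real n / (2 * real s)) * real n powr (real n - real n / real s)"
      using key npos by (intro mult_strict_right_mono) auto
    also have "\<dots> = real n powr (real n / (2 * real s) + (real n - real n / real s))"
      by (rule powr_add[symmetric])
    also have "real n / (2 * real s) + (real n - real n / real s) = (1 - 1 / (2 * real s)) * real n"
      using assms by (simp add: field_simps)
    finally show "C * B ^ n * real n powr (real n - real n / real s)
            < real n powr ((1 - 1 / (2 * real s)) * real n)" .
  qed
qed

lemma not_speed_above_bell_if_bounded:
  assumes "B \<ge> 1" "C \<ge> 1" "s \<ge> 1"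
    and bound: "\<And>n. n \<ge> 1 \<Longrightarrow> real (speed \<X> n) \<le> C * B ^ n * real n powr (real n - real n / real s)"
  shows "\<not> speed_above_bell \<X>"
proof
  assume "speed_above_bell \<X>"
  then have "eventually (\<lambda>n. real (speed \<X> n) \<ge> real n powr ((1 - 1 / (2 * real s)) * real n)) sequentially"
    using assms(3) unfolding speed_above_bell_def by simp
  moreover note exp_times_powr_eventually_less[OF assms(1-3)]
  moreover have "eventually (\<lambda>n::nat. n \<ge> 1) sequentially" by (rule eventually_ge_at_top)
  ultimately have "eventually (\<lambda>n::nat. False) sequentially"
    by eventually_elim (use bound in fastforce)
  then show False by simp
qed


section \<open>The flip graph of an (l,d)-partition\<close>

lemma verts_induced [simp]: "verts (induced G S) = S"
  by (simp add: verts_def induced_def)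

lemma edges_induced [simp]: "edges (induced G S) = edges G \<inter> (S \<times> S)"
  by (simp add: edges_def induced_def)

definition bag_of :: "nat set set \<Rightarrow> nat \<Rightarrow> nat set" where
  "bag_of P x = (THE B. B \<in> P \<and> x \<in> B)"

definition dense_pair :: "ugraph \<Rightarrow> nat \<Rightarrow> nat set \<Rightarrow> nat set \<Rightarrow> bool" where
  "dense_pair G d A B \<longleftrightarrow>
     (\<forall>v\<in>A. card (B - nbhd G v - {v}) \<le> d) \<and> (\<forall>v\<in>B. card (A - nbhd G v - {v}) \<le> d)"

definition flip_edges :: "ugraph \<Rightarrow> nat set \<Rightarrow> nat set set \<Rightarrow> nat \<Rightarrow> (nat \<times> nat) set" where
  "flip_edges G V' P d = {(x, y). x \<in> V' \<and> y \<in> V' \<and> x \<noteq> y \<and>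
      ((x, y) \<in> edges G \<longleftrightarrow> \<not> dense_pair (induced G V') d (bag_of P x) (bag_of P y))}"

lemma dense_pair_commute: "dense_pair G d A B = dense_pair G d B A"
  unfolding dense_pair_def by blast

lemma bag_of_eq:
  assumes "ld_partition G l d P" "B \<in> P" "x \<in> B"
  shows "bag_of P x = B"
  unfolding bag_of_def
proof (rule the_equality)
  fix B' assume "B' \<in> P \<and> x \<in> B'"
  moreover have "\<forall>A\<in>P. \<forall>B\<in>P. A \<noteq> B \<longrightarrow> A \<inter> B = {}"
    using assms(1) unfolding ld_partition_def by simp
  ultimately show "B' = B" using assms(2,3) by blast
qed (use assms in simp)

lemma bag_of_in:
  assumes "ld_partition G l d P" "x \<in> verts G"
  shows "bag_of P x \<in> P" "x \<in> bag_of P x"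
proof -
  have "\<Union>P = verts G" using assms(1) unfolding ld_partition_def by simp
  then obtain B where "B \<in> P" "x \<in> B" using assms(2) by blast
  then show "bag_of P x \<in> P" "x \<in> bag_of P x" using bag_of_eq[OF assms(1)] by simp_all
qed

lemma bag_indexing:
  assumes P: "ld_partition G l d P"
  obtains k EH where "\<forall>v\<in>verts G. k v < card P" "EH \<subseteq> {0..<card P} \<times> {0..<card P}"
    "\<forall>a b. (a, b) \<in> EH \<longrightarrow> (b, a) \<in> EH"
    "\<forall>u\<in>verts G. \<forall>v\<in>verts G. (k u, k v) \<in> EH \<longleftrightarrow> dense_pair G d (bag_of P u) (bag_of P v)"
proof -
  have "finite P" using P unfolding ld_partition_def by simp
  then obtain idx where idx: "bij_betw idx P {0..<card P}" using ex_bij_betw_finite_nat by blast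
  define EH where "EH = {(idx B, idx B') | B B'. B \<in> P \<and> B' \<in> P \<and> dense_pair G d B B'}"
  have idx_less: "idx B < card P" if "B \<in> P" for B
    using bij_betw_apply[OF idx that] by simp
  then have "\<forall>v\<in>verts G. idx (bag_of P v) < card P"
    using bag_of_in(1)[OF P] by blast
  moreover have "EH \<subseteq> {0..<card P} \<times> {0..<card P}"
    unfolding EH_def using idx_less by auto
  moreover have "\<forall>a b. (a, b) \<in> EH \<longrightarrow> (b, a) \<in> EH"
    unfolding EH_def using dense_pair_commute[of G d] by blast
  moreover have "(idx B, idx B') \<in> EH \<longleftrightarrow> dense_pair G d B B'" if "B \<in> P" "B' \<in> P" for B B'
    using that inj_onD[OF bij_betw_imp_inj_on[OF idx]] unfolding EH_def by blast
  then have "\<forall>u\<in>verts G. \<forall>v\<in>verts G.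
      (idx (bag_of P u), idx (bag_of P v)) \<in> EH \<longleftrightarrow> dense_pair G d (bag_of P u) (bag_of P v)"
    using bag_of_in(1)[OF P] by simp
  ultimately show thesis by (rule that[of "\<lambda>v. idx (bag_of P v)" EH])
qed

lemma flip_edges_subset: "flip_edges G V' P d \<subseteq> V' \<times> V'"
  unfolding flip_edges_def by auto

lemma flip_edges_sym:
  assumes "is_graph G" "(x, y) \<in> flip_edges G V' P d"
  shows "(y, x) \<in> flip_edges G V' P d"
  using assms dense_pair_commute unfolding flip_edges_def is_graph_def by auto

lemma card_flip_edges_image_Int_bag_le:
  assumes P: "ld_partition (induced G V') l d P" and B: "B \<in> P" and x: "x \<in> V'"
    and finV': "finite V'"
  shows "card (flip_edges G V' P d `` {x} \<inter> B) \<le> d"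
proof -
  let ?F = "flip_edges G V' P d" and ?G' = "induced G V'"
  define A where "A = bag_of P x"
  have A: "A \<in> P" "x \<in> A" unfolding A_def using bag_of_in[OF P] x by auto
  have BV': "B \<subseteq> V'" using B P unfolding ld_partition_def by auto
  then have finB: "finite B" using finV' by (rule finite_subset)
  have bagB: "\<And>y. y \<in> B \<Longrightarrow> bag_of P y = B" using bag_of_eq[OF P B] by simp
  show ?thesis
  proof (cases "dense_pair ?G' d A B")
    case True
    then have "?F `` {x} \<inter> B \<subseteq> B - nbhd ?G' x - {x}"
      using A bagB unfolding flip_edges_def nbhd_def A_def by auto
    then have "card (?F `` {x} \<inter> B) \<le> card (B - nbhd ?G' x - {x})"
      using finB by (intro card_mono) auto
    also have "\<dots> \<le> d" using True A unfolding dense_pair_def by auto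
    finally show ?thesis .
  next
    case False
    then have sparse: "\<forall>v\<in>A. card (nbhd ?G' v \<inter> B) \<le> d"
      using P A(1) B unfolding ld_partition_def dense_pair_def by blast
    have "?F `` {x} \<inter> B \<subseteq> nbhd ?G' x \<inter> B"
      using False A bagB BV' unfolding flip_edges_def nbhd_def A_def by auto
    then have "card (?F `` {x} \<inter> B) \<le> card (nbhd ?G' x \<inter> B)"
      using finB by (intro card_mono) auto
    also have "\<dots> \<le> d" using sparse A by auto
    finally show ?thesis .
  qed
qed

lemma card_flip_edges_image_le:
  assumes G: "is_graph G" and V': "V' \<subseteq> verts G" and P: "ld_partition (induced G V') l d P"
  shows "finite (flip_edges G V' P d `` {x}) \<and> card (flip_edges G V' P d `` {x}) \<le> l * d"
proof -
  let ?F = "flip_edges G V' P d"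
  have finV': "finite V'" using G V' unfolding is_graph_def by (auto intro: finite_subset)
  have UP: "\<Union>P = V'" and finP: "finite P" and cP: "card P \<le> l"
    using P unfolding ld_partition_def by auto
  have F_V': "?F `` {x} \<subseteq> V'" by (rule Image_subset[OF flip_edges_subset])
  show ?thesis
  proof (cases "x \<in> V'")
    case False
    then have "?F `` {x} = {}" unfolding flip_edges_def by auto
    then show ?thesis by simp
  next
    case True
    have "card (?F `` {x}) = card (\<Union>B\<in>P. ?F `` {x} \<inter> B)"
      using F_V' UP by (intro arg_cong[where f = card]) blast
    also have "\<dots> \<le> (\<Sum>B\<in>P. card (?F `` {x} \<inter> B))" by (rule card_UN_le[OF finP])
    also have "\<dots> \<le> (\<Sum>B\<in>P. d)"
      by (rule sum_mono) (rule card_flip_edges_image_Int_bag_le[OF P _ True finV'])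
    also have "\<dots> \<le> l * d" using cP by simp
    finally show ?thesis using F_V' finV' finite_subset by blast
  qed
qed

lemma flip_rtrancl_image_subset:
  "(flip_edges G V' P d)\<^sup>* `` {v} \<subseteq> insert v V'"
proof
  fix u assume "u \<in> (flip_edges G V' P d)\<^sup>* `` {v}"
  then have "(v, u) \<in> (flip_edges G V' P d)\<^sup>*" by simp
  then show "u \<in> insert v V'" by induction (use flip_edges_subset[of G V' P d] in auto)
qed


section \<open>Factors from induced flip paths\<close>

definition contains_factor :: "ugraph set \<Rightarrow> nat \<Rightarrow> nat \<Rightarrow> bool" where
  "contains_factor \<X> l m \<longleftrightarrow> (\<exists>A EH w G. finite A \<and> card A \<le> l \<and> EH \<subseteq> A \<times> A
     \<and> (\<forall>a b. (a, b) \<in> EH \<longrightarrow> (b, a) \<in> EH)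
     \<and> length w = m \<and> set w \<subseteq> A \<and> G \<in> \<X> \<and> graph_iso G (factor_graph EH w))"

lemma verts_factor_graph: "verts (factor_graph EH w) = {1..length w}"
  by (simp add: factor_graph_def verts_def)

lemma edges_factor_graph_Suc:
  assumes "i < length w" "j < length w"
  shows "(Suc i, Suc j) \<in> edges (factor_graph EH w) \<longleftrightarrow> i \<noteq> j \<and>
    ((nat \<bar>int i - int j\<bar> = 1 \<and> (w ! i, w ! j) \<notin> EH) \<or>
     (nat \<bar>int i - int j\<bar> > 1 \<and> (w ! i, w ! j) \<in> EH))"
  using assms unfolding factor_graph_def edges_def by auto

lemma graph_iso_induced_enumeration:
  assumes f: "inj_on f {0..<m}" and H: "verts H = {1..m}"
    and edges: "\<And>i j. i < m \<Longrightarrow> j < m \<Longrightarrow> (f i, f j) \<in> edges G \<longleftrightarrow> (Suc i, Suc j) \<in> edges H"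
  shows "graph_iso (induced G (f ` {0..<m})) H"
  unfolding graph_iso_def
proof (intro exI[of _ "Suc \<circ> inv_into {0..<m} f"] conjI ballI)
  have "bij_betw (inv_into {0..<m} f) (f ` {0..<m}) {0..<m}"
    using f by (simp add: bij_betw_inv_into inj_on_imp_bij_betw)
  moreover have "bij_betw Suc {0..<m} {1..m}"
    by (simp add: bij_betw_def image_Suc_atLeastLessThan atLeastLessThanSuc_atLeastAtMost)
  ultimately show "bij_betw (Suc \<circ> inv_into {0..<m} f) (verts (induced G (f ` {0..<m}))) (verts H)"
    using H by (simp add: bij_betw_trans)
  fix x y assume "x \<in> verts (induced G (f ` {0..<m}))" "y \<in> verts (induced G (f ` {0..<m}))"
  then obtain i j where "i < m" "j < m" "x = f i" "y = f j" by auto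
  then show "(x, y) \<in> edges (induced G (f ` {0..<m})) \<longleftrightarrow>
      ((Suc \<circ> inv_into {0..<m} f) x, (Suc \<circ> inv_into {0..<m} f) y) \<in> edges H"
    using edges f by auto
qed

text \<open>Along an induced flip path, consecutive vertices are adjacent exactly when their bags
  form a sparse pair, and all other pairs exactly when they form a dense one.\<close>
lemma edges_induced_flip_path_iff:
  assumes graph: "is_graph G" and f: "inj_on f {0..<m}" "\<forall>i<m. f i \<in> V'"
    and path: "\<forall>i. Suc i < m \<longrightarrow> (f i, f (Suc i)) \<in> flip_edges G V' P d"
    and induced: "\<forall>i j. j < m \<longrightarrow> Suc i < j \<longrightarrow> (f i, f j) \<notin> flip_edges G V' P d"
    and w: "length w = m"
    and EH: "\<forall>i<m. \<forall>j<m. (w ! i, w ! j) \<in> EH \<longleftrightarrow>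
      dense_pair (induced G V') d (bag_of P (f i)) (bag_of P (f j))"
    and ij: "i < m" "j < m"
  shows "(f i, f j) \<in> edges G \<longleftrightarrow> (Suc i, Suc j) \<in> edges (factor_graph EH w)"
proof (cases "i = j")
  case True
  then show ?thesis using graph edges_factor_graph_Suc ij w unfolding is_graph_def by simp
next
  case False
  let ?F = "flip_edges G V' P d"
  have "f i \<noteq> f j" using f(1) ij False by (simp add: inj_on_eq_iff)
  then have flip: "(f i, f j) \<in> ?F \<longleftrightarrow>
      ((f i, f j) \<in> edges G \<longleftrightarrow> (w ! i, w ! j) \<notin> EH)"
    using f(2) ij EH unfolding flip_edges_def by auto
  have flip_sym: "(f i, f j) \<in> ?F \<longleftrightarrow> (f j, f i) \<in> ?F"
    using flip_edges_sym[OF graph] by blast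
  have "(f i, f j) \<in> ?F \<longleftrightarrow> nat \<bar>int i - int j\<bar> = 1"
  proof (cases "j = Suc i \<or> i = Suc j")
    case True
    then show ?thesis using path flip_sym ij by auto
  next
    case False
    then have "Suc i < j \<or> Suc j < i" using \<open>i \<noteq> j\<close> by linarith
    then show ?thesis using induced flip_sym ij False by auto
  qed
  then show ?thesis using flip edges_factor_graph_Suc[of i w j EH] ij w False by auto
qed

lemma contains_factor_if_induced_flip_path:
  assumes H: "hereditary \<X>" and G: "G \<in> \<X>" and V': "V' \<subseteq> verts G"
    and P: "ld_partition (induced G V') l d P"
    and f: "inj_on f {0..<m}" "\<forall>i<m. f i \<in> V'"
    and path: "\<forall>i. Suc i < m \<longrightarrow> (f i, f (Suc i)) \<in> flip_edges G V' P d"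
    and induced: "\<forall>i j. j < m \<longrightarrow> Suc i < j \<longrightarrow> (f i, f j) \<notin> flip_edges G V' P d"
  shows "contains_factor \<X> l m"
proof -
  have graph: "is_graph G" using H G unfolding hereditary_def by auto
  obtain k EH where k: "\<forall>v\<in>V'. k v < card P" "EH \<subseteq> {0..<card P} \<times> {0..<card P}"
    "\<forall>a b. (a, b) \<in> EH \<longrightarrow> (b, a) \<in> EH"
    "\<forall>u\<in>V'. \<forall>v\<in>V'. (k u, k v) \<in> EH \<longleftrightarrow> dense_pair (induced G V') d (bag_of P u) (bag_of P v)"
    by (rule bag_indexing[OF P, unfolded verts_induced])
  define w where "w = map (\<lambda>i. k (f i)) [0..<m]"
  have "\<forall>i<m. \<forall>j<m. (w ! i, w ! j) \<in> EH \<longleftrightarrow>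
      dense_pair (induced G V') d (bag_of P (f i)) (bag_of P (f j))"
    using k(4) f(2) unfolding w_def by simp
  then have "graph_iso (induced G (f ` {0..<m})) (factor_graph EH w)"
    using edges_induced_flip_path_iff[OF graph f path induced]
    by (intro graph_iso_induced_enumeration[OF f(1)]) (simp_all add: verts_factor_graph w_def)
  moreover have "induced G (f ` {0..<m}) \<in> \<X>"
    using H G V' f(2) unfolding hereditary_def by (metis image_subset_iff atLeastLessThan_iff subsetD)
  moreover have "set w \<subseteq> {0..<card P}" "length w = m" using k(1) f(2) unfolding w_def by auto
  moreover have "card {0..<card P} \<le> l" using P unfolding ld_partition_def by simp
  ultimately show ?thesis unfolding contains_factor_def using k(2,3) by blast
qed

lemma card_flip_component_le_if_no_factor:
  assumes H: "hereditary \<X>" and no_factor: "\<not> contains_factor \<X> l m" and "m > 0"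
    and G: "G \<in> \<X>" and V': "V' \<subseteq> verts G" and P: "ld_partition (induced G V') l d P"
  shows "card ((flip_edges G V' P d)\<^sup>* `` {v}) \<le> (\<Sum>k<m. (l * d) ^ k)"
proof (cases "v \<in> V'")
  case False
  have "(flip_edges G V' P d)\<^sup>* `` {v} = {v}"
  proof -
    have "(v, u) \<notin> flip_edges G V' P d" for u using False flip_edges_subset by blast
    then show ?thesis by (auto elim: converse_rtranclE)
  qed
  moreover have "(l * d) ^ 0 \<le> (\<Sum>k<m. (l * d) ^ k)" by (rule member_le_sum) (use \<open>m > 0\<close> in auto)
  ultimately show ?thesis by simp
next
  case True
  show ?thesis
  proof (rule ccontr)
    let ?F = "flip_edges G V' P d"
    assume "\<not> ?thesis"
    then have large: "card (?F\<^sup>* `` {v}) > (\<Sum>k<m. (l * d) ^ k)" by simp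
    have "is_graph G" using H G unfolding hereditary_def by simp
    then obtain f where f: "inj_on f {0..<m}" "\<forall>i. Suc i < m \<longrightarrow> (f i, f (Suc i)) \<in> ?F"
      "\<forall>i j. j < m \<longrightarrow> Suc i < j \<longrightarrow> (f i, f j) \<notin> ?F" "\<forall>i<m. (v, f i) \<in> ?F\<^sup>*"
      using induced_path_in_large_component[OF card_flip_edges_image_le[OF _ V' P] large] by blast
    have "\<forall>i<m. f i \<in> V'" using f(4) flip_rtrancl_image_subset True by blast
    then show False
      using contains_factor_if_induced_flip_path[OF H G V' P f(1) _ f(2,3)] no_factor by blast
  qed
qed


section \<open>Encoding graphs with small flip components\<close>

definition index_set :: "'a list \<Rightarrow> 'a set \<Rightarrow> nat set" where
  "index_set xs A = {i. i < length xs \<and> xs ! i \<in> A}"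

lemma set_nths_index_set: "set (nths xs (index_set xs A)) = set xs \<inter> A"
  unfolding index_set_def set_nths by (auto simp: in_set_conv_nth)

lemma index_set_subset: "index_set xs A \<subseteq> {0..<length xs}"
  unfolding index_set_def by auto

text \<open>A label \<open>(b, I, k, J)\<close> of a vertex \<open>v\<close> says whether \<open>v\<close> is marked (lies outside the
  partitioned part), the positions \<open>I\<close> of the neighbours of \<open>v\<close> in the sorted list of marked
  vertices, the index \<open>k\<close> of the bag of \<open>v\<close>, and the positions \<open>J\<close> of the flip neighbours of
  \<open>v\<close> in the sorted list of its class of the representative system.\<close>
type_synonym label = "bool \<times> nat set \<times> nat \<times> nat set"

type_synonym code = "(nat \<Rightarrow> label) \<times> (nat \<times> nat) set \<times> nat set \<times> (nat \<Rightarrow> nat)"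

definition marked :: "nat set \<Rightarrow> (nat \<Rightarrow> label) \<Rightarrow> nat set" where
  "marked S L = {v \<in> S. fst (L v)}"

definition class_list :: "nat set \<Rightarrow> nat set \<Rightarrow> (nat \<Rightarrow> nat) \<Rightarrow> nat \<Rightarrow> nat list" where
  "class_list S M g v = sorted_list_of_set {u \<in> S. representative M g u = representative M g v}"

definition decode_edges :: "nat set \<Rightarrow> code \<Rightarrow> (nat \<times> nat) set" where
  "decode_edges S = (\<lambda>(L, EH, M, g). {(v, u). v \<in> S \<and> u \<in> S \<and>
     (case (L v, L u) of ((_, Iv, kv, Jv), (_, Iu, ku, _)) \<Rightarrow>
       if u \<in> marked S L then u \<in> set (nths (sorted_list_of_set (marked S L)) Iv)
       else if v \<in> marked S L then v \<in> set (nths (sorted_list_of_set (marked S L)) Iu)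
       else v \<noteq> u \<and> (u \<in> set (nths (class_list S M g v) Jv) \<longleftrightarrow> (kv, ku) \<notin> EH))})"

definition labels :: "nat \<Rightarrow> nat \<Rightarrow> nat \<Rightarrow> label set" where
  "labels c l s = UNIV \<times> Pow {0..<c} \<times> {0..l} \<times> Pow {0..<s}"

definition codes :: "nat set \<Rightarrow> nat \<Rightarrow> nat \<Rightarrow> nat \<Rightarrow> code set" where
  "codes S c l s =
     (S \<rightarrow>\<^sub>E labels c l s) \<times> Pow ({0..l} \<times> {0..l}) \<times> representative_systems S s"

lemma flip_components_representative_system:
  assumes G: "is_graph (S, E)" and V': "V' \<subseteq> S"
    and small: "\<forall>v. card ((flip_edges (S, E) V' P d)\<^sup>* `` {v}) \<le> s"
  obtains M g where "(M, g) \<in> representative_systems S s"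
    "\<And>v. v \<in> S \<Longrightarrow> set (class_list S M g v) = (flip_edges (S, E) V' P d)\<^sup>* `` {v}"
    "\<And>v. v \<in> S \<Longrightarrow> length (class_list S M g v) \<le> s"
proof -
  let ?F = "flip_edges (S, E) V' P d"
  have finS: "finite S" using G unfolding is_graph_def verts_def by simp
  have comp_S: "?F\<^sup>* `` {v} \<subseteq> S" if "v \<in> S" for v
    using flip_rtrancl_image_subset V' that by blast
  have "sym ?F" using flip_edges_sym[OF G] by (auto intro: symI)
  then have Q: "equiv S (?F\<^sup>* \<inter> S \<times> S)" by (rule equiv_rtrancl_Int)
  have class_eq: "(?F\<^sup>* \<inter> S \<times> S) `` {v} = ?F\<^sup>* `` {v}" if "v \<in> S" for v
    using comp_S[OF that] that by blast
  have "\<forall>v\<in>S. card ((?F\<^sup>* \<inter> S \<times> S) `` {v}) \<le> s" using small class_eq by simp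
  then obtain M g where Mg: "(M, g) \<in> representative_systems S s"
    "\<forall>u\<in>S. \<forall>v\<in>S. representative M g u = representative M g v \<longleftrightarrow> (u, v) \<in> ?F\<^sup>* \<inter> S \<times> S"
    using representative_system_of_small_classes[OF finS Q] by blast
  have set_class: "set (class_list S M g v) = ?F\<^sup>* `` {v}" if v: "v \<in> S" for v
  proof -
    have "{u \<in> S. representative M g u = representative M g v} = (?F\<^sup>* \<inter> S \<times> S) `` {v}"
      using Mg(2) v Q unfolding equiv_def by (auto dest: symD)
    moreover have "finite (?F\<^sup>* `` {v})" using comp_S[OF v] finS by (rule finite_subset)
    ultimately show ?thesis unfolding class_list_def class_eq[OF v] by simp
  qed
  moreover have "length (class_list S M g v) \<le> s" if "v \<in> S" for v
  proof -
    have "length (class_list S M g v) = card (?F\<^sup>* `` {v})"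
      using set_class[OF that] by (metis class_list_def distinct_card distinct_sorted_list_of_set)
    then show ?thesis using small by simp
  qed
  ultimately show thesis using that Mg(1) by blast
qed

lemma decode_edges_eq:
  assumes G: "is_graph (S, E)"
    and L: "\<And>v. v \<in> S \<Longrightarrow> L v = (v \<notin> V', I v, k v, J v)"
    and I: "\<And>v. v \<in> S \<Longrightarrow> set (nths (sorted_list_of_set (S - V')) (I v)) = (S - V') \<inter> nbhd (S, E) v"
    and J: "\<And>v. v \<in> S \<Longrightarrow> set (nths (class_list S M g v) (J v)) = F `` {v}"
    and flip: "\<And>u v. u \<in> V' \<Longrightarrow> v \<in> V' \<Longrightarrow> u \<noteq> v \<Longrightarrow>
      (u, v) \<in> F \<longleftrightarrow> ((u, v) \<in> E \<longleftrightarrow> (k u, k v) \<notin> EH)"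
  shows "decode_edges S (L, EH, M, g) = E"
proof -
  have E_S: "\<And>u v. (u, v) \<in> E \<Longrightarrow> u \<in> S \<and> v \<in> S"
    and E_sym: "\<And>u v. (u, v) \<in> E \<Longrightarrow> (v, u) \<in> E" and E_irrefl: "\<And>v. (v, v) \<notin> E"
    using G unfolding is_graph_def verts_def edges_def by auto
  have "marked S L = S - V'" unfolding marked_def using L by auto
  then have decode: "(v, u) \<in> decode_edges S (L, EH, M, g) \<longleftrightarrow> v \<in> S \<and> u \<in> S \<and>
      (if u \<notin> V' then (v, u) \<in> E else if v \<notin> V' then (u, v) \<in> E
       else v \<noteq> u \<and> ((v, u) \<in> F \<longleftrightarrow> (k v, k u) \<notin> EH))" for v u
    using L I J unfolding decode_edges_def nbhd_def edges_def by auto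
  show ?thesis
  proof (intro set_eqI iffI; clarify)
    fix v u
    show "(v, u) \<in> E" if "(v, u) \<in> decode_edges S (L, EH, M, g)"
      using that E_sym flip by (auto simp: decode split: if_splits)
    show "(v, u) \<in> decode_edges S (L, EH, M, g)" if "(v, u) \<in> E"
      using that E_S E_sym E_irrefl[of v] flip[of v u] by (auto simp: decode)
  qed
qed

lemma edges_in_decode_edges_image:
  assumes G: "is_graph (S, E)" and V': "V' \<subseteq> S"
    and P: "ld_partition (induced (S, E) V') l d P" and R: "card (S - V') < c"
    and small: "\<forall>v. card ((flip_edges (S, E) V' P d)\<^sup>* `` {v}) \<le> s"
  shows "E \<in> decode_edges S ` codes S c l s"
proof -
  let ?F = "flip_edges (S, E) V' P d" and ?rs = "sorted_list_of_set (S - V')"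
  obtain M g where Mg: "(M, g) \<in> representative_systems S s"
    "\<And>v. v \<in> S \<Longrightarrow> set (class_list S M g v) = ?F\<^sup>* `` {v}"
    "\<And>v. v \<in> S \<Longrightarrow> length (class_list S M g v) \<le> s"
    using flip_components_representative_system[OF G V' small] by blast
  obtain k EH where k: "\<forall>v\<in>V'. k v < card P" "EH \<subseteq> {0..<card P} \<times> {0..<card P}"
    "\<forall>a b. (a, b) \<in> EH \<longrightarrow> (b, a) \<in> EH"
    "\<forall>u\<in>V'. \<forall>v\<in>V'. (k u, k v) \<in> EH \<longleftrightarrow> dense_pair (induced (S, E) V') d (bag_of P u) (bag_of P v)"
    by (rule bag_indexing[OF P, unfolded verts_induced])
  define k' where "k' v = (if v \<in> V' then k v else 0)" for v
  define L where "L = restrict (\<lambda>v. (v \<notin> V', index_set ?rs (nbhd (S, E) v), k' v,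
    index_set (class_list S M g v) (?F `` {v}))) S"
  have cP: "card P \<le> l" using P unfolding ld_partition_def by simp
  have "L \<in> S \<rightarrow>\<^sub>E labels c l s"
  proof -
    have "length ?rs < c" using R by simp
    then have "index_set ?rs A \<subseteq> {0..<c}" for A using index_set_subset[of ?rs A] by auto
    moreover have "index_set (class_list S M g v) A \<subseteq> {0..<s}" if "v \<in> S" for v A
      using index_set_subset[of "class_list S M g v" A] Mg(3)[OF that] by auto
    moreover have "k' v \<le> l" for v using k(1) cP unfolding k'_def by auto
    ultimately show ?thesis unfolding labels_def L_def by auto
  qed
  moreover have "EH \<subseteq> {0..l} \<times> {0..l}" using cP by (intro order_trans[OF k(2)]) auto
  ultimately have "(L, EH, M, g) \<in> codes S c l s" unfolding codes_def using Mg(1) by simp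
  moreover have "decode_edges S (L, EH, M, g) = E"
  proof (rule decode_edges_eq[OF G])
    have "finite S" using G unfolding is_graph_def verts_def by simp
    then show "set (nths ?rs (index_set ?rs (nbhd (S, E) v))) = (S - V') \<inter> nbhd (S, E) v" for v
      unfolding set_nths_index_set by simp
    show "set (nths (class_list S M g v) (index_set (class_list S M g v) (?F `` {v}))) = ?F `` {v}"
      if "v \<in> S" for v
      unfolding set_nths_index_set Mg(2)[OF that] by auto
    show "(u, v) \<in> ?F \<longleftrightarrow> ((u, v) \<in> E \<longleftrightarrow> (k' u, k' v) \<notin> EH)"
      if "u \<in> V'" "v \<in> V'" "u \<noteq> v" for u v
      using that k(4) unfolding flip_edges_def edges_def k'_def by auto
  qed (simp add: L_def)
  ultimately show ?thesis by (metis image_eqI)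
qed

lemma finite_labels: "finite (labels c l s)"
  unfolding labels_def by simp

lemma finite_codes:
  assumes "finite S"
  shows "finite (codes S c l s)"
  unfolding codes_def using assms finite_representative_systems[OF assms] finite_labels
  by (simp add: finite_PiE)

lemma card_codes_le:
  assumes "finite S" "card S = n" "s \<ge> 1" "n \<ge> 1"
  shows "real (card (codes S c l s)) \<le>
    2 ^ ((l + 1) * (l + 1)) * real (2 * card (labels c l s)) ^ n * real n powr (real n - real n / real s)"
proof -
  let ?K = "card (labels c l s)" and ?R = "representative_systems S s"
  have "card (codes S c l s) = ?K ^ n * (2 ^ ((l + 1) * (l + 1)) * card ?R)"
    unfolding codes_def using assms(1,2) finite_labels by (simp add: card_PiE card_cartesian_product card_Pow)
  then have "real (card (codes S c l s)) = real ?K ^ n * 2 ^ ((l + 1) * (l + 1)) * real (card ?R)"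
    by simp
  also have "\<dots> \<le> real ?K ^ n * 2 ^ ((l + 1) * (l + 1)) * (2 ^ n * real n powr (real n - real n / real s))"
    using card_representative_systems_le[OF assms] by (intro mult_left_mono) auto
  also have "\<dots> = 2 ^ ((l + 1) * (l + 1)) * real (2 * ?K) ^ n * real n powr (real n - real n / real s)"
    by (simp add: power_mult_distrib)
  finally show ?thesis .
qed

lemma speed_le_card_codes:
  assumes H: "hereditary \<X>"
    and partition: "\<forall>G\<in>\<X>. \<exists>V'\<subseteq>verts G. strong_ld_graph (induced G V') l d \<and> card (verts G - V') < c"
    and small: "\<And>G V' P v. G \<in> \<X> \<Longrightarrow> V' \<subseteq> verts G \<Longrightarrow> ld_partition (induced G V') l d P \<Longrightarrow>
      card ((flip_edges G V' P d)\<^sup>* `` {v}) \<le> s"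
  shows "speed \<X> n \<le> card (codes {1..n} c l s)"
proof -
  have "{E. ({1..n}, E) \<in> \<X>} \<subseteq> decode_edges {1..n} ` codes {1..n} c l s"
  proof
    fix E assume "E \<in> {E. ({1..n}, E) \<in> \<X>}"
    then have G: "({1..n}, E) \<in> \<X>" by simp
    then obtain V' P where V': "V' \<subseteq> {1..n}" "card ({1..n} - V') < c"
      and P: "ld_partition (induced ({1..n}, E) V') l d P"
      using partition unfolding strong_ld_graph_def strong_ld_partition_def verts_def by auto
    have "is_graph ({1..n}, E)" using H G unfolding hereditary_def by blast
    then show "E \<in> decode_edges {1..n} ` codes {1..n} c l s"
      using edges_in_decode_edges_image[OF _ V'(1) P V'(2)] small[OF G _ P] V'(1)
      unfolding verts_def by simp
  qed
  then have "speed \<X> n \<le> card (decode_edges {1..n} ` codes {1..n} c l s)"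
    unfolding speed_def using finite_codes by (intro card_mono) auto
  also have "\<dots> \<le> card (codes {1..n} c l s)" using finite_codes by (intro card_image_le) auto
  finally show ?thesis .
qed

theorem lemma3p11:
  fixes \<X> :: "ugraph set" and l d c :: nat
  assumes "hereditary \<X>"
    and "speed_above_bell \<X>"
    and "finite_distinguishing_number \<X>"
    and "\<forall>G\<in>\<X>. \<exists>V'\<subseteq>verts G. strong_ld_graph (induced G V') l d \<and> card (verts G - V') < c"
  shows "\<forall>m::nat. m > 0 \<longrightarrow> (\<exists>A EH w G. finite A \<and> card A \<le> l \<and> EH \<subseteq> A \<times> A
            \<and> (\<forall>a b. (a, b) \<in> EH \<longrightarrow> (b, a) \<in> EH)
            \<and> length w = m \<and> set w \<subseteq> A
            \<and> G \<in> \<X> \<and> graph_iso G (factor_graph EH w))"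
proof (intro allI impI)
  fix m :: nat assume "m > 0"
  define s where "s = (\<Sum>k<m. (l * d) ^ k)"
  have s: "s \<ge> 1" unfolding s_def using \<open>m > 0\<close> member_le_sum[of 0 "{..<m}" "(^) (l * d)"] by simp
  let ?K = "card (labels c l s)"
  have "contains_factor \<X> l m"
  proof (rule ccontr)
    assume "\<not> contains_factor \<X> l m"
    from card_flip_component_le_if_no_factor[OF assms(1) this \<open>m > 0\<close>]
    have codes: "speed \<X> n \<le> card (codes {1..n} c l s)" for n
      unfolding s_def by (rule speed_le_card_codes[OF assms(1,4)])
    have "real (speed \<X> n) \<le> 2 ^ ((l + 1) * (l + 1)) * real (2 * ?K) ^ n
        * real n powr (real n - real n / real s)" if "n \<ge> 1" for n
      using codes[of n] card_codes_le[of "{1..n}" n s c l] s that by simp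
    moreover have "labels c l s \<noteq> {}" unfolding labels_def by auto
    then have "?K \<ge> 1" using finite_labels by (simp add: Suc_leI card_gt_0_iff)
    moreover have "(1::real) \<le> 2 ^ ((l + 1) * (l + 1))" by (rule one_le_power) simp
    ultimately have "\<not> speed_above_bell \<X>"
      by (intro not_speed_above_bell_if_bounded[where B = "real (2 * ?K)", OF _ _ s]) auto
    then show False using assms(2) by contradiction
  qed
  then show "\<exists>A EH w G. finite A \<and> card A \<le> l \<and> EH \<subseteq> A \<times> A
            \<and> (\<forall>a b. (a, b) \<in> EH \<longrightarrow> (b, a) \<in> EH)
            \<and> length w = m \<and> set w \<subseteq> A
            \<and> G \<in> \<X> \<and> graph_iso G (factor_graph EH w)"
    unfolding contains_factor_def .
qed

end
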